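(* Let $r=2$ and let $U$ be an $\mathbb{F}_q$-subspace of $\mathbb{F}_{q^n}^2$ with $\dim_{\mathbb{F}_q}U=n$, with determinantal polynomial $F_U(x,y)$. Then the number of zeros of $F_U$ in $\mathrm{PG}(1,q^n)$, counted with multiplicity, equals $\deg F_U=1+q+\dots+q^{n-1}$; i.e. all roots of $F_U$ lie in $\mathrm{PG}(1,q^n)$ ($F_U$ is a product of linear forms over $\mathbb{F}_{q^n}$).
   Context: $q$ a prime power, $n\ge2$. For an $\mathbb{F}_q$-subspace $U$ of $\mathbb{F}_{q^n}^2$, $L_U=\{\langle u\rangle_{\mathbb{F}_{q^n}}:u\in U\setminus\{0\}\}$. Determinantal polynomial: for $u=(u_0,u_1)$ let $\hat u=(u_0,u_1,u_0^q,u_1^q,\dots,u_0^{q^{n-1}},u_1^{q^{n-1}})\in\mathbb{F}_{q^n}^{2n}$; with an $\mathbb{F}_q$-basis $u_1,\dots,u_n$ of $U$, $F_U(x,y)$ is the determinant of the $2n\times 2n$ matrix whose first $n$ rows are $\hat u_1,\dots,\hat u_n$ and whose remaining rows are, for $i=0,\dots,n-1$, the vector with $x^{q^i},y^{q^i}$ in positions $2i,2i+1$ and zeros elsewhere. Its zeros in $\mathrm{PG}(1,q^n)$ are the points of $L_U$. *)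

theory Defs
  imports "HOL-Computational_Algebra.Polynomial" "HOL-Computational_Algebra.Primes"
    "Jordan_Normal_Form.Determinant" "HOL-Library.Product_Plus"
begin

text \<open>The ambient field F_{q^n} is a finite field type 'a with CARD('a) = q^n;
  F_q is its subfield of fixed points of x |-> x^q.\<close>
definition Fq :: "nat \<Rightarrow> ('a::field) set" where
  "Fq q = {x. x ^ q = x}"

definition prime_power :: "nat \<Rightarrow> bool" where
  "prime_power q \<longleftrightarrow> (\<exists>p k. prime p \<and> k > 0 \<and> q = p ^ k)"

definition vscale :: "'a::field \<Rightarrow> 'a \<times> 'a \<Rightarrow> 'a \<times> 'a" where
  "vscale c v = (c * fst v, c * snd v)"

definition Fq_subspace :: "nat \<Rightarrow> ('a::field \<times> 'a) set \<Rightarrow> bool" where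
  "Fq_subspace q U \<longleftrightarrow> 0 \<in> U \<and> (\<forall>v\<in>U. \<forall>w\<in>U. v + w \<in> U)
     \<and> (\<forall>c\<in>Fq q. \<forall>v\<in>U. vscale c v \<in> U)"

definition Fq_basis :: "nat \<Rightarrow> ('a::field \<times> 'a) set \<Rightarrow> nat \<Rightarrow> (nat \<Rightarrow> 'a \<times> 'a) \<Rightarrow> bool" where
  "Fq_basis q U n u \<longleftrightarrow>
     (\<forall>c. (\<forall>i<n. c i \<in> Fq q) \<and> (\<Sum>i<n. vscale (c i) (u i)) = 0 \<longrightarrow> (\<forall>i<n. c i = 0))
     \<and> U = {(\<Sum>i<n. vscale (c i) (u i)) | c. \<forall>i<n. c i \<in> Fq q}"

text \<open>Bivariate polynomials over 'a as 'a poly poly: X is the inner variable,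
  Y the outer variable.\<close>
definition varX :: "'a::comm_ring_1 poly poly" where "varX = [:[:0, 1:]:]"
definition varY :: "'a::comm_ring_1 poly poly" where "varY = [:0, 1:]"

definition const2 :: "'a::comm_ring_1 \<Rightarrow> 'a poly poly" where "const2 c = [:[:c:]:]"

definition comp :: "'a \<times> 'a \<Rightarrow> nat \<Rightarrow> 'a" where
  "comp v j = (if j = 0 then fst v else snd v)"

text \<open>The 2n x 2n determinantal matrix: rows 0..n-1 are hat(u_r), where position
  2i+j holds (u_r)_j^(q^i); row n+i has X^(q^i), Y^(q^i) in positions 2i, 2i+1.\<close>
definition det_matrix :: "nat \<Rightarrow> nat \<Rightarrow> (nat \<Rightarrow> 'a::comm_ring_1 \<times> 'a) \<Rightarrow> 'a poly poly mat" where
  "det_matrix q n u = mat (2*n) (2*n) (\<lambda>(r, c).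
     if r < n then const2 (comp (u r) (c mod 2) ^ (q ^ (c div 2)))
     else if c = 2 * (r - n) then varX ^ (q ^ (r - n))
     else if c = 2 * (r - n) + 1 then varY ^ (q ^ (r - n))
     else 0)"

definition F_U :: "nat \<Rightarrow> nat \<Rightarrow> (nat \<Rightarrow> 'a::comm_ring_1 \<times> 'a) \<Rightarrow> 'a poly poly" where
  "F_U q n u = det (det_matrix q n u)"

text \<open>The linear form b X - a Y vanishing at the point <(a,b)>.\<close>
definition linform :: "'a::comm_ring_1 \<times> 'a \<Rightarrow> 'a poly poly" where
  "linform v = const2 (snd v) * varX - const2 (fst v) * varY"

end

theory Submission
  imports Defs "Jordan_Normal_Form.VS_Connect"
begin

text \<open>For \<open>v = (a, b)\<close> let \<open>L v = b X - a Y\<close> be the linear form vanishing at \<open>\<langle>v\<rangle>\<close>.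
  Since \<open>x \<mapsto> x ^ q\<close> is additive, \<open>L v ^ q ^ i = b ^ q ^ i X ^ q ^ i - a ^ q ^ i Y ^ q ^ i\<close>, so
  column operations that clear the rows of powers of \<open>X\<close> and \<open>Y\<close> turn \<open>F\<^sub>U\<close>, up to a
  nonzero constant, into the Moore determinant \<open>det (L u\<^sub>r ^ q ^ i)\<close>.
  As a function of its last entry, the Moore determinant of \<open>z\<^sub>0, \<dots>, z\<^sub>m\<close> is an
  \<open>F\<^sub>q\<close>-linear polynomial of degree \<open>q ^ m\<close> vanishing at all \<open>F\<^sub>q\<close>-combinations of
  \<open>z\<^sub>0, \<dots>, z\<^sub>m\<^sub>-\<^sub>1\<close>; for \<open>F\<^sub>q\<close>-independent \<open>u\<^sub>r\<close> these are \<open>q ^ m\<close> distinct roots, so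
  by induction the Moore determinant is the product of the forms \<open>L (u\<^sub>l - \<Sum>j<l. c\<^sub>j u\<^sub>j)\<close>
  over all \<open>l < n\<close> and \<open>c \<in> F\<^sub>q\<^sup>l\<close>: \<open>\<Sum>l<n. q ^ l\<close> forms of nonzero vectors.
  That \<open>F\<^sub>q\<close> has exactly \<open>q\<close> elements follows by counting the fibres of
  \<open>x \<mapsto> x ^ q - x\<close>, whose values are roots of the trace polynomial \<open>\<Sum>i<n. X ^ q ^ i\<close>.\<close>

section \<open>Finite fields and the Frobenius map\<close>

lemma finite_field_power_card:
  fixes x :: "'a::{finite,field}"
  shows "x ^ card (UNIV :: 'a set) = x"
proof -
  have "x ^ Suc (card (UNIV - {0::'a})) = x"
    using class_cring.units_power_order_eq_one[of x] by (cases "x = 0") (simp_all add: class_field.field_Units)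
  moreover have "Suc (card (UNIV - {0::'a})) = card (UNIV :: 'a set)"
    using finite_UNIV_card_ge_0[where 'a='a] by (simp add: card_Diff_singleton)
  ultimately show ?thesis
    by metis
qed

lemma prime_CHAR_finite_field: "prime CHAR('a::{finite,field})"
  by (rule prime_CHAR_semidom) (simp add: finite_imp_CHAR_pos)

lemma CHAR_dvd_card: "CHAR('a::{finite,comm_ring_1}) dvd card (UNIV :: 'a set)"
proof -
  have "(\<Sum>a\<in>UNIV. a) = (\<Sum>a\<in>UNIV. a + (1::'a))"
    by (rule sum.reindex_bij_witness[of _ "\<lambda>a. a + 1" "\<lambda>a. a - 1"]) auto
  then have "of_nat (card (UNIV :: 'a set)) = (0::'a)"
    by (simp add: sum.distrib)
  then show ?thesis
    by (simp add: of_nat_eq_0_iff_char_dvd)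
qed

lemma prime_power_card_imp_char_power:
  assumes "prime_power q" and "n > 0" and "card (UNIV :: 'a::{finite,field} set) = q ^ n"
  shows "\<exists>k>0. q = CHAR('a) ^ k"
proof -
  obtain p k where p: "prime p" and k: "k > 0" and q: "q = p ^ k"
    using assms(1) unfolding prime_power_def by blast
  have "CHAR('a) dvd p ^ (k * n)"
    using CHAR_dvd_card[where 'a='a] assms(3) q by (simp add: power_mult)
  then have "CHAR('a) = p"
    using prime_CHAR_finite_field[where 'a='a] p prime_dvd_power primes_dvd_imp_eq by blast
  with k q show ?thesis by blast
qed

lemma power_char_power_diff:
  assumes "prime CHAR('b::comm_ring_1)" and "m = CHAR('b) ^ e"
  shows "(x - y :: 'b) ^ m = x ^ m - y ^ m"
proof -
  have "x ^ m = (x - y) ^ m + y ^ m"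
    using freshmans_dream'[OF assms, of "x - y" y] by simp
  then show ?thesis
    by (simp add: eq_diff_eq)
qed

lemma Fq_power_eq: "c \<in> Fq q \<Longrightarrow> c ^ (q ^ i) = c"
proof (induction i)
  case (Suc i)
  have "c ^ (q ^ Suc i) = (c ^ q) ^ (q ^ i)"
    by (simp add: power_mult mult.commute)
  with Suc \<open>c \<in> Fq q\<close> show ?case
    by (simp add: Fq_def)
qed simp

lemma Fq_1: "1 \<in> Fq q"
  by (simp add: Fq_def)

section \<open>Linearized polynomials\<close>

definition linearized_poly :: "nat \<Rightarrow> (nat \<Rightarrow> 'b::comm_ring_1) \<Rightarrow> nat \<Rightarrow> 'b poly" where
  "linearized_poly q c m = (\<Sum>i<m. monom (c i) (q ^ i))"

lemma poly_linearized_poly: "poly (linearized_poly q c m) x = (\<Sum>i<m. c i * x ^ (q ^ i))"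
  by (simp add: linearized_poly_def poly_sum poly_monom)

lemma coeff_linearized_poly:
  "coeff (linearized_poly q c m) j = (\<Sum>i<m. if q ^ i = j then c i else 0)"
  by (simp add: linearized_poly_def coeff_sum coeff_monom)

lemma degree_linearized_poly_le:
  assumes "q > 0"
  shows "degree (linearized_poly q c (Suc m)) \<le> q ^ m"
proof (rule degree_le, intro allI impI)
  fix j assume "q ^ m < j"
  moreover have "q ^ i \<le> q ^ m" if "i < Suc m" for i
    using that assms by (intro power_increasing) auto
  ultimately show "coeff (linearized_poly q c (Suc m)) j = 0"
    unfolding coeff_linearized_poly by (intro sum.neutral) fastforce
qed

lemma coeff_linearized_poly_top:
  assumes "q \<ge> 2"
  shows "coeff (linearized_poly q c (Suc m)) (q ^ m) = c m"
proof -
  have "q ^ i = q ^ m \<longleftrightarrow> i = m" for i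
    using assms by (simp add: power_inject_exp)
  then show ?thesis
    by (simp add: coeff_linearized_poly sum.delta')
qed

lemma linearized_poly_Suc_nonzero:
  assumes "q \<ge> 2" and "c m \<noteq> 0"
  shows "linearized_poly q c (Suc m) \<noteq> 0"
proof
  assume "linearized_poly q c (Suc m) = 0"
  then have "coeff (linearized_poly q c (Suc m)) (q ^ m) = 0"
    by simp
  with assms show False
    by (simp add: coeff_linearized_poly_top)
qed

lemma const2_0 [simp]: "const2 0 = 0"
  by (simp add: const2_def)

lemma const2_1 [simp]: "const2 1 = 1"
  by (simp add: const2_def one_pCons)

lemma const2_add: "const2 (a + b) = const2 a + const2 b"
  by (simp add: const2_def)

lemma const2_diff: "const2 (a - b) = const2 a - const2 (b :: 'b::comm_ring_1)"
  by (simp add: const2_def)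

lemma const2_uminus: "const2 (- a) = - const2 (a :: 'b::comm_ring_1)"
  by (simp add: const2_def)

lemma const2_mult: "const2 (a * b) = const2 a * const2 b"
  by (simp add: const2_def)

lemma const2_power: "const2 (a ^ m) = const2 a ^ m"
  by (induction m) (simp_all add: const2_mult)

lemma linform_add: "linform (v + w) = linform v + linform w"
  by (simp add: linform_def const2_add algebra_simps)

lemma linform_diff: "linform (v - w) = linform v - linform (w :: 'b::comm_ring_1 \<times> 'b)"
  by (simp add: linform_def const2_diff algebra_simps)

lemma linform_vscale: "linform (vscale a v) = const2 a * linform (v :: 'b::field \<times> 'b)"
  by (simp add: linform_def vscale_def const2_mult algebra_simps)

lemma linform_0 [simp]: "linform 0 = 0"
  by (simp add: linform_def zero_prod_def)

lemma linform_sum: "linform (sum f A) = (\<Sum>x\<in>A. linform (f x))"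
  by (induction A rule: infinite_finite_induct) (simp_all add: linform_add)

lemma linform_eq_0_iff: "linform v = 0 \<longleftrightarrow> v = (0 :: 'b::comm_ring_1 \<times> 'b)"
proof
  assume "linform v = 0"
  then have "coeff (coeff (linform v) 0) 1 = 0" and "coeff (coeff (linform v) 1) 0 = 0"
    by simp_all
  then show "v = 0"
    by (cases v) (simp add: linform_def const2_def varX_def varY_def zero_prod_def)
qed (simp add: linform_def zero_prod_def)

lemma linform_power_char_power:
  assumes "prime CHAR('b::comm_ring_1)" and "m = CHAR('b) ^ e"
  shows "linform (v :: 'b \<times> 'b) ^ m
    = const2 (snd v ^ m) * varX ^ m - const2 (fst v ^ m) * varY ^ m"
proof -
  have "prime CHAR('b poly poly)" and "m = CHAR('b poly poly) ^ e"
    using assms by simp_all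
  then show ?thesis
    unfolding linform_def by (simp add: power_char_power_diff power_mult_distrib const2_power)
qed

definition Fq_independent :: "nat \<Rightarrow> nat \<Rightarrow> (nat \<Rightarrow> 'a::field \<times> 'a) \<Rightarrow> bool" where
  "Fq_independent q n u \<longleftrightarrow>
     (\<forall>c. (\<forall>i<n. c i \<in> Fq q) \<and> (\<Sum>i<n. vscale (c i) (u i)) = 0 \<longrightarrow> (\<forall>i<n. c i = 0))"

lemma Fq_independentD:
  assumes "Fq_independent q n u" and "\<forall>i<n. c i \<in> Fq q" and "(\<Sum>i<n. vscale (c i) (u i)) = 0"
    and "i < n"
  shows "c i = 0"
  using assms unfolding Fq_independent_def by blast

lemma Fq_basis_imp_independent: "Fq_basis q U n u \<Longrightarrow> Fq_independent q n u"
  by (simp add: Fq_basis_def Fq_independent_def)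

lemma vscale_0_left [simp]: "vscale 0 v = 0"
  by (simp add: vscale_def zero_prod_def)

lemma vscale_1_left [simp]: "vscale 1 v = v"
  by (simp add: vscale_def)

lemma vscale_uminus_left: "vscale (- a) v = - vscale a v"
  by (simp add: vscale_def)

lemma sum_vscale_restrict:
  fixes l n :: nat
  assumes "l \<le> n"
  shows "(\<Sum>i<n. vscale (if i < l then c i else 0) (u i)) = (\<Sum>i<l. vscale (c i) (u i))"
proof -
  have "(\<Sum>i<n. vscale (if i < l then c i else 0) (u i)) = (\<Sum>i<l. vscale (if i < l then c i else 0) (u i))"
    using assms by (rule_tac sum.mono_neutral_right) auto
  then show ?thesis
    by simp
qed

lemma Fq_independent_mono:
  fixes u :: "nat \<Rightarrow> 'a::field \<times> 'a"
  assumes "Fq_independent q n u" and "l \<le> n" and "(0::'a) \<in> Fq q"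
  shows "Fq_independent q l u"
  unfolding Fq_independent_def
proof (rule allI, rule impI)
  fix c assume c: "(\<forall>i<l. c i \<in> Fq q) \<and> (\<Sum>i<l. vscale (c i) (u i)) = 0"
  let ?c = "\<lambda>i. if i < l then c i else 0"
  have "(\<forall>i<n. ?c i \<in> Fq q) \<and> (\<Sum>i<n. vscale (?c i) (u i)) = 0"
    using c assms(3) sum_vscale_restrict[OF assms(2), of c u] by simp
  then have "?c i = 0" if "i < n" for i
    using Fq_independentD[OF assms(1), of ?c i] that by blast
  then show "\<forall>i<l. c i = 0"
    using assms(2) by (metis order_less_le_trans)
qed

definition moore_point :: "(nat \<Rightarrow> 'a::field \<times> 'a) \<Rightarrow> nat \<Rightarrow> (nat \<Rightarrow> 'a) \<Rightarrow> 'a \<times> 'a" where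
  "moore_point u l c = u l - (\<Sum>j<l. vscale (c j) (u j))"

section \<open>Moore determinants\<close>

lemma poly_eq_smult_prod_roots:
  fixes P :: "'b::idom poly"
  assumes "degree P \<le> card S" and "finite S" and "\<forall>s\<in>S. poly P s = 0"
  shows "P = smult (coeff P (card S)) (\<Prod>s\<in>S. [:- s, 1:])"
proof (rule ccontr)
  let ?G = "\<Prod>s\<in>S. [:- s, 1:]"
  let ?H = "P - smult (coeff P (card S)) ?G"
  assume "P \<noteq> smult (coeff P (card S)) ?G"
  then have "?H \<noteq> 0"
    by simp
  have "degree ?G = card S"
    by (subst degree_prod_eq_sum_degree) auto
  moreover have "coeff ?G (card S) = 1"
    using lead_coeff_prod[of "\<lambda>s. [:- s, 1:]" S] calculation by simp
  ultimately have "degree ?H \<le> card S" and "coeff ?H (card S) = 0"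
    using assms(1) by (auto intro: degree_diff_le)
  then have "degree ?H < card S"
    using \<open>?H \<noteq> 0\<close> by (metis le_neq_implies_less leading_coeff_0_iff)
  have "S \<subseteq> {x. poly ?H x = 0}"
    using assms(2,3) by (auto simp: poly_prod prod_zero_iff)
  then have "card S \<le> card {x. poly ?H x = 0}"
    by (rule card_mono[OF poly_roots_finite[OF \<open>?H \<noteq> 0\<close>]])
  also have "\<dots> \<le> degree ?H"
    by (rule card_poly_roots_bound[OF \<open>?H \<noteq> 0\<close>])
  finally show False
    using \<open>degree ?H < card S\<close> by simp
qed

definition moore_mat :: "nat \<Rightarrow> (nat \<Rightarrow> 'b::comm_ring_1) \<Rightarrow> nat \<Rightarrow> 'b mat" where
  "moore_mat q z m = mat m m (\<lambda>(r, i). z r ^ (q ^ i))"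

lemma moore_mat_carrier [simp]: "moore_mat q z m \<in> carrier_mat m m"
  and dim_row_moore_mat [simp]: "dim_row (moore_mat q z m) = m"
  and dim_col_moore_mat [simp]: "dim_col (moore_mat q z m) = m"
  by (simp_all add: moore_mat_def)

lemma det_moore_mat_0 [simp]: "det (moore_mat q z 0) = 1"
  by (simp add: det_def moore_mat_def)

text \<open>Expanding along the last row, the Moore determinant is a linearized polynomial in its
  last entry whose leading coefficient is the Moore determinant of the other entries.\<close>
definition moore_poly :: "nat \<Rightarrow> (nat \<Rightarrow> 'b::comm_ring_1) \<Rightarrow> nat \<Rightarrow> 'b poly" where
  "moore_poly q z m = linearized_poly q (cofactor (moore_mat q z (Suc m)) m) (Suc m)"

lemma poly_moore_poly: "poly (moore_poly q z m) w = det (moore_mat q (z(m := w)) (Suc m))"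
proof -
  have "mat_delete (moore_mat q (z(m := w)) (Suc m)) m i = mat_delete (moore_mat q z (Suc m)) m i"
    if "i < Suc m" for i
    using that by (intro eq_matI) (auto simp: moore_mat_def mat_delete_def)
  then have "det (moore_mat q (z(m := w)) (Suc m))
      = (\<Sum>i<Suc m. w ^ (q ^ i) * cofactor (moore_mat q z (Suc m)) m i)"
    by (subst laplace_expansion_row[of _ "Suc m" m]) (auto simp: cofactor_def moore_mat_def)
  then show ?thesis
    by (simp add: moore_poly_def poly_linearized_poly mult.commute)
qed

lemma coeff_moore_poly_top:
  assumes "q \<ge> 2"
  shows "coeff (moore_poly q z m) (q ^ m) = det (moore_mat q z m)"
proof -
  have "mat_delete (moore_mat q z (Suc m)) m m = moore_mat q z m"
    by (intro eq_matI) (auto simp: moore_mat_def mat_delete_def)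
  then show ?thesis
    by (simp add: moore_poly_def coeff_linearized_poly_top[OF assms] cofactor_def)
qed

lemma degree_moore_poly_le: "q > 0 \<Longrightarrow> degree (moore_poly q z m) \<le> q ^ m"
  by (simp add: moore_poly_def degree_linearized_poly_le)

lemma poly_moore_poly_entry:
  assumes "j < m"
  shows "poly (moore_poly q z m) (z j) = 0"
  unfolding poly_moore_poly
proof (rule det_identical_rows[of _ "Suc m" j m])
  show "row (moore_mat q (z(m := z j)) (Suc m)) j = row (moore_mat q (z(m := z j)) (Suc m)) m"
    using assms by (intro eq_vecI) (auto simp: moore_mat_def)
qed (use assms in auto)

definition Fq_tuples :: "nat \<Rightarrow> nat \<Rightarrow> (nat \<Rightarrow> 'a::field) set" where
  "Fq_tuples q l = PiE {..<l} (\<lambda>_. Fq q)"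

lemma finite_Fq_tuples [simp]: "finite (Fq_tuples q l :: (nat \<Rightarrow> 'a::{finite,field}) set)"
  by (simp add: Fq_tuples_def finite_PiE)

lemma card_Fq_tuples: "card (Fq_tuples q l :: (nat \<Rightarrow> 'a::{finite,field}) set) = card (Fq q :: 'a set) ^ l"
  by (simp add: Fq_tuples_def card_PiE)

section \<open>Reduction of the determinantal matrix to a Moore matrix\<close>

lemma index_mult_mat_sum:
  assumes "A \<in> carrier_mat N N" and "B \<in> carrier_mat N N" and "i < N" and "j < N"
  shows "(A * B) $$ (i, j) = (\<Sum>l<N. A $$ (i, l) * B $$ (l, j))"
  using assms by (auto simp: scalar_prod_def lessThan_atLeast0 intro!: sum.cong)

definition interleave :: "nat \<Rightarrow> nat \<Rightarrow> nat" where
  "interleave n c = (if c < n then 2 * c else 2 * (c - n) + 1)"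

lemma interleave_less: "c < 2 * n \<Longrightarrow> interleave n c < 2 * n"
  by (auto simp: interleave_def)

lemma interleave_inj: "a < 2 * n \<Longrightarrow> b < 2 * n \<Longrightarrow> interleave n a = interleave n b \<Longrightarrow> a = b"
  by (auto simp: interleave_def split: if_splits) presburger+

text \<open>Right multiplication by \<open>elim_mat q n\<close> replaces column \<open>2 * i\<close> by \<open>Y ^ q ^ i\<close> times
  column \<open>2 * i\<close> minus \<open>X ^ q ^ i\<close> times column \<open>2 * i + 1\<close>. In \<open>det_matrix q n u\<close> the new
  column vanishes below row \<open>n\<close>; \<open>interleave_mat n\<close> then moves the even columns to the front,
  which makes the matrix block triangular.\<close>
definition elim_mat :: "nat \<Rightarrow> nat \<Rightarrow> 'a::comm_ring_1 poly poly mat" where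
  "elim_mat q n = mat (2 * n) (2 * n) (\<lambda>(j, c).
     if even c then
       (if j = c then varY ^ (q ^ (c div 2)) else if j = c + 1 then - (varX ^ (q ^ (c div 2))) else 0)
     else (if j = c then 1 else 0))"

definition interleave_mat :: "nat \<Rightarrow> 'a::comm_ring_1 poly poly mat" where
  "interleave_mat n = mat (2 * n) (2 * n) (\<lambda>(j, c). if j = interleave n c then 1 else 0)"

definition reduction_mat :: "nat \<Rightarrow> nat \<Rightarrow> 'a::comm_ring_1 poly poly mat" where
  "reduction_mat q n = mat (2 * n) (2 * n) (\<lambda>(j, c). elim_mat q n $$ (j, interleave n c))"

lemma elim_mat_mult_interleave_mat: "elim_mat q n * interleave_mat n = reduction_mat q n"
proof (rule eq_matI)
  fix i j assume "i < dim_row (reduction_mat q n)" and "j < dim_col (reduction_mat q n)"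
  then have ij: "i < 2 * n" "j < 2 * n"
    by (auto simp: reduction_mat_def)
  have "(elim_mat q n * interleave_mat n) $$ (i, j)
      = (\<Sum>l<2 * n. elim_mat q n $$ (i, l) * (if l = interleave n j then 1 else 0))"
    using ij by (subst index_mult_mat_sum[of _ "2 * n"]) (auto simp: elim_mat_def interleave_mat_def)
  also have "\<dots> = elim_mat q n $$ (i, interleave n j)"
    using interleave_less[OF ij(2)] by (simp add: if_distrib[of "(*) _"] sum.delta' cong: if_cong)
  finally show "(elim_mat q n * interleave_mat n) $$ (i, j) = reduction_mat q n $$ (i, j)"
    using ij by (simp add: reduction_mat_def)
qed (auto simp: elim_mat_def interleave_mat_def reduction_mat_def)

lemma prod_lessThan_double_even:
  fixes n :: nat
  shows "(\<Prod>c<2 * n. if even c then g (c div 2) else 1) = (\<Prod>i<n. g i :: 'b::comm_monoid_mult)"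
proof (induction n)
  case (Suc n)
  have "2 * Suc n = Suc (Suc (2 * n))"
    by simp
  with Suc show ?case
    by simp
qed simp

lemma det_elim_mat: "det (elim_mat q n :: 'a::idom poly poly mat) = (\<Prod>i<n. varY ^ (q ^ i))"
proof -
  have "det (elim_mat q n :: 'a poly poly mat) = prod_list (diag_mat (elim_mat q n))"
    by (rule det_lower_triangular[of "2 * n"]) (auto simp: elim_mat_def)
  also have "\<dots> = (\<Prod>c<2 * n. if even c then varY ^ (q ^ (c div 2)) else 1)"
    by (simp add: diag_mat_def elim_mat_def prod.distinct_set_conv_list[symmetric]
        lessThan_atLeast0 cong: if_cong)
  also have "\<dots> = (\<Prod>i<n. varY ^ (q ^ i))"
    by (rule prod_lessThan_double_even)
  finally show ?thesis .
qed

lemma det_interleave_mat: "det (interleave_mat n :: 'a::idom poly poly mat) \<in> {1, -1}"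
proof -
  let ?P = "interleave_mat n :: 'a poly poly mat"
  have "transpose_mat ?P * ?P = 1\<^sub>m (2 * n)"
  proof (rule eq_matI)
    fix a b assume "a < dim_row (1\<^sub>m (2 * n) :: 'a poly poly mat)"
      and "b < dim_col (1\<^sub>m (2 * n) :: 'a poly poly mat)"
    then have ab: "a < 2 * n" "b < 2 * n"
      by auto
    have "(transpose_mat ?P * ?P) $$ (a, b)
        = (\<Sum>l<2 * n. (if l = interleave n a then 1 else 0) * (if l = interleave n b then 1 else 0))"
      using ab by (subst index_mult_mat_sum[of _ "2 * n"]) (auto simp: interleave_mat_def)
    also have "\<dots> = (if interleave n a = interleave n b then 1 else 0)"
      using interleave_less[OF ab(1)] by (simp add: if_distrib[of "\<lambda>x. x * _"] sum.delta cong: if_cong)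
    also have "\<dots> = 1\<^sub>m (2 * n) $$ (a, b)"
      using interleave_inj[OF ab] ab by auto
    finally show "(transpose_mat ?P * ?P) $$ (a, b) = 1\<^sub>m (2 * n) $$ (a, b)" .
  qed (auto simp: interleave_mat_def)
  then have "det ?P * det ?P = 1"
    using det_mult[of "transpose_mat ?P" "2 * n" ?P] det_transpose[of ?P "2 * n"]
    by (simp add: interleave_mat_def det_one)
  then have "det ?P = 1 \<or> det ?P = -1"
    using square_eq_1_iff by blast
  then show ?thesis
    by simp
qed

lemma det_reduction_mat:
  "\<exists>\<epsilon>\<in>{1, -1}. det (reduction_mat q n :: 'a::idom poly poly mat) = \<epsilon> * (\<Prod>i<n. varY ^ (q ^ i))"
proof -
  have "det (reduction_mat q n :: 'a poly poly mat) = det (elim_mat q n) * det (interleave_mat n)"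
    unfolding elim_mat_mult_interleave_mat[symmetric]
    by (rule det_mult) (auto simp: elim_mat_def interleave_mat_def)
  then show ?thesis
    using det_interleave_mat[where 'a='a, of n] by (auto simp: det_elim_mat)
qed

lemma sum_mult_two_deltas:
  fixes f :: "nat \<Rightarrow> 'b::comm_ring_1"
  assumes "a < N" and "b < N" and "a \<noteq> b"
  shows "(\<Sum>l<N. f l * (if l = a then x else if l = b then y else 0)) = f a * x + f b * y"
proof -
  have "(\<Sum>l<N. f l * (if l = a then x else if l = b then y else 0))
      = (\<Sum>l<N. (if l = a then f l * x else 0) + (if l = b then f l * y else 0))"
    using assms by (intro sum.cong) auto
  also have "\<dots> = f a * x + f b * y"
    using assms by (simp add: sum.distrib)
  finally show ?thesis .
qed

lemma mult_reduction_mat_entry: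
  assumes "A \<in> carrier_mat (2 * n) (2 * n)" and "r < 2 * n" and "c < 2 * n"
  shows "(A * reduction_mat q n) $$ (r, c) = (if c < n
    then A $$ (r, 2 * c) * varY ^ (q ^ c) - A $$ (r, 2 * c + 1) * varX ^ (q ^ c)
    else A $$ (r, 2 * (c - n) + 1))"
proof -
  have prod: "(A * reduction_mat q n) $$ (r, c) = (\<Sum>l<2 * n. A $$ (r, l) * reduction_mat q n $$ (l, c))"
    using assms by (intro index_mult_mat_sum) (auto simp: reduction_mat_def)
  show ?thesis
  proof (cases "c < n")
    case True
    have "(A * reduction_mat q n) $$ (r, c) = (\<Sum>l<2 * n. A $$ (r, l) *
        (if l = 2 * c then varY ^ (q ^ c) else if l = 2 * c + 1 then - (varX ^ (q ^ c)) else 0))"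
      unfolding prod by (rule sum.cong[OF refl])
        (use True in \<open>auto simp: reduction_mat_def elim_mat_def interleave_def\<close>)
    also have "\<dots> = A $$ (r, 2 * c) * varY ^ (q ^ c) + A $$ (r, 2 * c + 1) * - (varX ^ (q ^ c))"
      using True by (intro sum_mult_two_deltas) auto
    finally show ?thesis
      using True by simp
  next
    case False
    have "(A * reduction_mat q n) $$ (r, c)
        = (\<Sum>l<2 * n. A $$ (r, l) * (if l = 2 * (c - n) + 1 then 1 else 0))"
      unfolding prod by (rule sum.cong[OF refl])
        (use False assms(3) in \<open>auto simp: reduction_mat_def elim_mat_def interleave_def\<close>)
    also have "\<dots> = A $$ (r, 2 * (c - n) + 1)"
      using False assms(3) by (simp add: if_distrib[of "(*) _"] cong: if_cong)
    finally show ?thesis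
      using False by simp
  qed
qed

lemma det_matrix_carrier [simp]: "det_matrix q n u \<in> carrier_mat (2 * n) (2 * n)"
  by (simp add: det_matrix_def)

lemma index_det_matrix:
  assumes "r < 2 * n" and "l < 2 * n"
  shows "det_matrix q n u $$ (r, l) = (if r < n then const2 (comp (u r) (l mod 2) ^ (q ^ (l div 2)))
    else if l = 2 * (r - n) then varX ^ (q ^ (r - n))
    else if l = 2 * (r - n) + 1 then varY ^ (q ^ (r - n)) else 0)"
  using assms by (simp add: det_matrix_def)

definition snd_powers_mat :: "nat \<Rightarrow> nat \<Rightarrow> (nat \<Rightarrow> 'a::comm_ring_1 \<times> 'a) \<Rightarrow> 'a poly poly mat" where
  "snd_powers_mat q n u = mat n n (\<lambda>(r, i). const2 (snd (u r) ^ (q ^ i)))"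

definition varY_powers_mat :: "nat \<Rightarrow> nat \<Rightarrow> 'a::comm_ring_1 poly poly mat" where
  "varY_powers_mat q n = mat n n (\<lambda>(r, i). if r = i then varY ^ (q ^ i) else 0)"

lemma det_varY_powers_mat:
  "det (varY_powers_mat q n :: 'a::idom poly poly mat) = (\<Prod>i<n. varY ^ (q ^ i))"
proof -
  have "det (varY_powers_mat q n :: 'a poly poly mat) = prod_list (diag_mat (varY_powers_mat q n))"
    by (rule det_lower_triangular[of n]) (auto simp: varY_powers_mat_def)
  then show ?thesis
    by (simp add: diag_mat_def varY_powers_mat_def prod.distinct_set_conv_list[symmetric]
        lessThan_atLeast0)
qed

section \<open>The subfield \<open>F\<^sub>q\<close> and the factorization of \<open>F\<^sub>U\<close>\<close>

definition artin_schreier :: "nat \<Rightarrow> 'a::comm_ring_1 \<Rightarrow> 'a" where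
  "artin_schreier q x = x ^ q - x"

context
  fixes q k :: nat
  assumes q_char_power: "q = CHAR('a::{finite,field}) ^ k" and k_pos: "k > 0"
begin

lemma q_ge_2: "q \<ge> 2"
proof -
  have "CHAR('a) ^ 1 \<le> CHAR('a) ^ k"
    using prime_gt_0_nat[OF prime_CHAR_finite_field[where 'a='a]] k_pos by (intro power_increasing) auto
  then show ?thesis
    using prime_ge_2_nat[OF prime_CHAR_finite_field[where 'a='a]] q_char_power by simp
qed

lemma power_q_diff: "(x - y :: 'a) ^ (q ^ i) = x ^ (q ^ i) - y ^ (q ^ i)"
  by (rule power_char_power_diff[OF prime_CHAR_finite_field, of _ "k * i"])
    (simp add: q_char_power power_mult)

lemma Fq_diff: "a \<in> Fq q \<Longrightarrow> b \<in> Fq q \<Longrightarrow> (a::'a) - b \<in> Fq q"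
  using power_q_diff[of a b 1] by (simp add: Fq_def)

lemma Fq_0: "(0::'a) \<in> Fq q"
  using q_ge_2 by (simp add: Fq_def)

lemma Fq_uminus: "a \<in> Fq q \<Longrightarrow> - (a::'a) \<in> Fq q"
  using Fq_diff[OF Fq_0, of a] by simp

lemma card_Fq_le: "card (Fq q :: 'a set) \<le> q"
proof -
  let ?P = "monom (1::'a) q + [:0, -1:]"
  have "degree [:0, -1::'a:] < degree (monom (1::'a) q)"
    using q_ge_2 by (simp add: degree_monom_eq)
  then have deg: "degree ?P = q"
    by (simp add: degree_add_eq_left degree_monom_eq)
  then have "?P \<noteq> 0"
    using q_ge_2 by auto
  moreover have "Fq q = {x. poly ?P x = (0::'a)}"
    by (auto simp: Fq_def poly_monom)
  ultimately show ?thesis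
    using card_poly_roots_bound[of ?P] deg by simp
qed

lemma artin_schreier_fibre:
  "{x. artin_schreier q x = artin_schreier q y} = (\<lambda>z. z + y) ` (Fq q :: 'a set)"
proof -
  have "artin_schreier q x = artin_schreier q y \<longleftrightarrow> x - y \<in> Fq q" for x
  proof -
    have "artin_schreier q x - artin_schreier q y = artin_schreier q (x - y)"
      using power_q_diff[of x y 1] by (simp add: artin_schreier_def)
    then have "artin_schreier q x = artin_schreier q y \<longleftrightarrow> artin_schreier q (x - y) = 0"
      by (metis eq_iff_diff_eq_0)
    then show ?thesis
      by (simp add: Fq_def artin_schreier_def)
  qed
  moreover have "x \<in> (\<lambda>z. z + y) ` Fq q \<longleftrightarrow> x - y \<in> Fq q" for x :: 'a
    using image_eqI[of x "\<lambda>z. z + y" "x - y" "Fq q"] by auto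
  ultimately show ?thesis
    by blast
qed

lemma card_UNIV_eq_card_range_artin_schreier:
  "card (UNIV :: 'a set) = card (range (artin_schreier q :: 'a \<Rightarrow> 'a)) * card (Fq q :: 'a set)"
proof -
  let ?fibre = "\<lambda>v. {x :: 'a. artin_schreier q x = v}"
  have "(\<Union>v\<in>range (artin_schreier q). ?fibre v) = UNIV"
    by blast
  then have "card (UNIV :: 'a set) = card (\<Union>v\<in>range (artin_schreier q). ?fibre v)"
    by simp
  also have "\<dots> = (\<Sum>v\<in>range (artin_schreier q). card (?fibre v))"
    by (rule card_UN_disjoint) auto
  also have "\<dots> = (\<Sum>v\<in>range (artin_schreier q :: 'a \<Rightarrow> 'a). card (Fq q :: 'a set))"
  proof (rule sum.cong[OF refl])
    fix v assume "v \<in> range (artin_schreier q :: 'a \<Rightarrow> 'a)"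
    then obtain y where "v = artin_schreier q y"
      by blast
    then show "card (?fibre v) = card (Fq q :: 'a set)"
      by (simp add: artin_schreier_fibre card_image)
  qed
  finally show ?thesis
    by simp
qed

text \<open>Every value of the Artin--Schreier map is a root of the trace polynomial
  \<open>\<Sum>i<n. X ^ q ^ i\<close>, because the sum telescopes to \<open>x ^ q ^ n - x = 0\<close>.\<close>
lemma card_range_artin_schreier_le:
  assumes "n > 0" and "card (UNIV :: 'a set) = q ^ n"
  shows "card (range (artin_schreier q :: 'a \<Rightarrow> 'a)) \<le> q ^ (n - 1)"
proof -
  define T :: "'a poly" where "T = linearized_poly q (\<lambda>_. 1) n"
  have n: "n = Suc (n - 1)"
    using assms(1) by simp
  have "T \<noteq> 0"
    unfolding T_def by (subst n, rule linearized_poly_Suc_nonzero[OF q_ge_2]) simp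
  have "poly T (artin_schreier q x) = 0" for x :: 'a
  proof -
    have "artin_schreier q x ^ (q ^ i) = x ^ (q ^ Suc i) - x ^ (q ^ i)" for i
      by (simp add: artin_schreier_def power_q_diff mult.commute flip: power_mult)
    then have "poly T (artin_schreier q x) = (\<Sum>i<n. x ^ (q ^ Suc i) - x ^ (q ^ i))"
      by (simp add: T_def poly_linearized_poly)
    also have "\<dots> = x ^ (q ^ n) - x ^ (q ^ 0)"
      by (rule sum_lessThan_telescope)
    finally show ?thesis
      using finite_field_power_card[of x] assms(2) by simp
  qed
  then have "card (range (artin_schreier q :: 'a \<Rightarrow> 'a)) \<le> card {y. poly T y = 0}"
    by (intro card_mono poly_roots_finite[OF \<open>T \<noteq> 0\<close>]) auto
  also have "\<dots> \<le> degree T"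
    by (rule card_poly_roots_bound[OF \<open>T \<noteq> 0\<close>])
  also have "\<dots> \<le> q ^ (n - 1)"
    unfolding T_def using q_ge_2 by (subst n, intro degree_linearized_poly_le) simp
  finally show ?thesis .
qed

lemma card_Fq:
  assumes "n > 0" and "card (UNIV :: 'a set) = q ^ n"
  shows "card (Fq q :: 'a set) = q"
proof -
  have "q ^ (n - 1) * q = q ^ n"
    using assms(1) by (simp flip: power_Suc2)
  also have "\<dots> \<le> q ^ (n - 1) * card (Fq q :: 'a set)"
    using card_range_artin_schreier_le[OF assms] card_UNIV_eq_card_range_artin_schreier assms(2)
    by (metis mult_right_mono zero_le)
  finally have "q \<le> card (Fq q :: 'a set)"
    using q_ge_2 by simp
  with card_Fq_le show ?thesis
    by simp
qed

lemma power_q_Fq_combination: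
  fixes z :: "nat \<Rightarrow> 'a poly poly"
  assumes "c \<in> Fq_tuples q m"
  shows "(\<Sum>j<m. const2 (c j) * z j) ^ (q ^ i) = (\<Sum>j<m. const2 (c j) * z j ^ (q ^ i))"
proof -
  have "prime CHAR('a poly poly)" and "q ^ i = CHAR('a poly poly) ^ (k * i)"
    using prime_CHAR_finite_field[where 'a='a] by (simp_all add: q_char_power power_mult)
  then have "(\<Sum>j<m. const2 (c j) * z j) ^ (q ^ i) = (\<Sum>j<m. (const2 (c j) * z j) ^ (q ^ i))"
    by (rule freshmans_dream_sum')
  also have "\<dots> = (\<Sum>j<m. const2 (c j) * z j ^ (q ^ i))"
  proof (rule sum.cong[OF refl])
    fix j assume "j \<in> {..<m}"
    then have "c j ^ (q ^ i) = c j"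
      using assms by (intro Fq_power_eq) (auto simp: Fq_tuples_def)
    then show "(const2 (c j) * z j) ^ (q ^ i) = const2 (c j) * z j ^ (q ^ i)"
      by (metis const2_power power_mult_distrib)
  qed
  finally show ?thesis .
qed

lemma poly_linearized_poly_Fq_combination:
  fixes z :: "nat \<Rightarrow> 'a poly poly"
  assumes "c \<in> Fq_tuples q m"
  shows "poly (linearized_poly q a s) (\<Sum>j<m. const2 (c j) * z j)
    = (\<Sum>j<m. const2 (c j) * poly (linearized_poly q a s) (z j))"
proof -
  have "poly (linearized_poly q a s) (\<Sum>j<m. const2 (c j) * z j)
      = (\<Sum>i<s. a i * (\<Sum>j<m. const2 (c j) * z j ^ (q ^ i)))"
    by (simp only: poly_linearized_poly power_q_Fq_combination[OF assms])
  also have "\<dots> = (\<Sum>i<s. \<Sum>j<m. const2 (c j) * (a i * z j ^ (q ^ i)))"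
    by (simp only: sum_distrib_left mult.left_commute)
  also have "\<dots> = (\<Sum>j<m. \<Sum>i<s. const2 (c j) * (a i * z j ^ (q ^ i)))"
    by (rule sum.swap)
  also have "\<dots> = (\<Sum>j<m. const2 (c j) * poly (linearized_poly q a s) (z j))"
    by (simp only: poly_linearized_poly sum_distrib_left)
  finally show ?thesis .
qed

text \<open>The roots of the Moore polynomial are the \<open>F\<^sub>q\<close>-combinations of the other entries;
  when these are pairwise distinct they exhaust its degree.\<close>
lemma det_moore_mat_Suc:
  fixes z :: "nat \<Rightarrow> 'a poly poly"
  assumes inj: "inj_on (\<lambda>c. \<Sum>j<m. const2 (c j) * z j) (Fq_tuples q m)"
    and card: "card (Fq q :: 'a set) = q"
  shows "det (moore_mat q z (Suc m)) = det (moore_mat q z m) *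
    (\<Prod>c\<in>Fq_tuples q m. z m - (\<Sum>j<m. const2 (c j) * z j))"
proof -
  define g where "g = (\<lambda>c. \<Sum>j<m. const2 (c j) * z j)"
  define S where "S = g ` Fq_tuples q m"
  have inj_g: "inj_on g (Fq_tuples q m)"
    using inj unfolding g_def .
  have "card S = card (Fq_tuples q m :: (nat \<Rightarrow> 'a) set)"
    using card_image[OF inj_g] unfolding S_def .
  also have "\<dots> = q ^ m"
    by (simp only: card_Fq_tuples card)
  finally have "card S = q ^ m" .
  have "poly (moore_poly q z m) (g c) = 0" if "c \<in> Fq_tuples q m" for c
  proof -
    have "poly (moore_poly q z m) (g c) = (\<Sum>j<m. const2 (c j) * poly (moore_poly q z m) (z j))"
      unfolding g_def moore_poly_def by (rule poly_linearized_poly_Fq_combination[OF that])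
    also have "\<dots> = 0"
      by (simp add: poly_moore_poly_entry)
    finally show ?thesis .
  qed
  then have "moore_poly q z m = smult (coeff (moore_poly q z m) (card S)) (\<Prod>s\<in>S. [:- s, 1:])"
    using degree_moore_poly_le[of q] q_ge_2 \<open>card S = q ^ m\<close>
    by (intro poly_eq_smult_prod_roots) (auto simp: S_def)
  then have moore_poly_eq: "moore_poly q z m = smult (det (moore_mat q z m)) (\<Prod>s\<in>S. [:- s, 1:])"
    by (simp add: \<open>card S = q ^ m\<close> coeff_moore_poly_top[OF q_ge_2])
  have "det (moore_mat q z (Suc m)) = poly (moore_poly q z m) (z m)"
    by (simp add: poly_moore_poly)
  also have "\<dots> = det (moore_mat q z m) * (\<Prod>s\<in>S. z m - s)"
    by (subst moore_poly_eq) (simp add: poly_prod)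
  also have "(\<Prod>s\<in>S. z m - s) = (\<Prod>c\<in>Fq_tuples q m. z m - g c)"
    unfolding S_def by (rule prod.reindex_cong[OF inj_g]) simp_all
  finally show ?thesis
    unfolding g_def .
qed

lemma linform_power_q:
  "linform (v :: 'a \<times> 'a) ^ (q ^ i)
    = const2 (snd v ^ (q ^ i)) * varX ^ (q ^ i) - const2 (fst v ^ (q ^ i)) * varY ^ (q ^ i)"
  by (rule linform_power_char_power[OF prime_CHAR_finite_field, of _ "k * i"])
    (simp add: q_char_power power_mult)

lemma det_matrix_mult_reduction_mat:
  fixes u :: "nat \<Rightarrow> 'a \<times> 'a"
  shows "det_matrix q n u * reduction_mat q n = four_block_mat
    ((-1) \<cdot>\<^sub>m moore_mat q (\<lambda>r. linform (u r)) n) (snd_powers_mat q n u) (0\<^sub>m n n) (varY_powers_mat q n)"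
    (is "?A * _ = ?B")
proof (rule eq_matI)
  fix r c assume "r < dim_row ?B" and "c < dim_col ?B"
  then have r: "r < 2 * n" and c: "c < 2 * n"
    by (auto simp: moore_mat_def varY_powers_mat_def)
  note A = index_det_matrix[OF r, of _ q u]
  have "(?A * reduction_mat q n) $$ (r, c) = (if c < n
      then ?A $$ (r, 2 * c) * varY ^ (q ^ c) - ?A $$ (r, 2 * c + 1) * varX ^ (q ^ c)
      else ?A $$ (r, 2 * (c - n) + 1))"
    using r c by (intro mult_reduction_mat_entry) simp_all
  also have "\<dots> = ?B $$ (r, c)"
  proof -
    have B: "?B $$ (r, c) = (if r < n
        then if c < n then - (linform (u r) ^ (q ^ c)) else snd_powers_mat q n u $$ (r, c - n)
        else if c < n then 0 else varY_powers_mat q n $$ (r - n, c - n))"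
      using r c by (simp add: moore_mat_def varY_powers_mat_def)
    show ?thesis
    proof (cases "r < n"; cases "c < n")
      assume "r < n" and "c < n"
      then show ?thesis
        using c by (simp add: A B comp_def linform_power_q)
    next
      assume "r < n" and "\<not> c < n"
      moreover have "(2 * (c - n) + 1) div 2 = c - n" and "(2 * (c - n) + 1) mod 2 = 1"
        by simp_all
      ultimately show ?thesis
        unfolding B using c by (simp add: A comp_def snd_powers_mat_def)
    next
      assume "\<not> r < n" and "c < n"
      moreover have "2 * c \<noteq> 2 * (r - n) + 1" and "2 * c + 1 \<noteq> 2 * (r - n)"
        by presburger+
      ultimately show ?thesis
        using c by (simp add: A B mult.commute)
    next
      assume "\<not> r < n" and "\<not> c < n"
      then show ?thesis
        unfolding B using r c by (simp add: A varY_powers_mat_def)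
    qed
  qed
  finally show "(?A * reduction_mat q n) $$ (r, c) = ?B $$ (r, c)" .
qed (auto simp: det_matrix_def reduction_mat_def moore_mat_def varY_powers_mat_def)

lemma F_U_eq_det_moore_mat:
  "\<exists>e. e \<noteq> (0::'a) \<and> F_U q n u = const2 e * det (moore_mat q (\<lambda>r. linform (u r)) n)"
proof -
  let ?A = "det_matrix q n u"
  let ?M = "det (moore_mat q (\<lambda>r. linform (u r)) n)"
  let ?Y = "\<Prod>i<n. varY ^ (q ^ i) :: 'a poly poly"
  obtain \<epsilon> where \<epsilon>: "\<epsilon> \<in> {1, -1}" and det_red: "det (reduction_mat q n :: 'a poly poly mat) = \<epsilon> * ?Y"
    using det_reduction_mat by blast
  have "det ?A * det (reduction_mat q n) = det (?A * reduction_mat q n)"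
    by (rule det_mult[symmetric, of _ "2 * n"]) (simp_all add: reduction_mat_def)
  also have "\<dots> = det ((-1) \<cdot>\<^sub>m moore_mat q (\<lambda>r. linform (u r)) n) * det (varY_powers_mat q n)"
    unfolding det_matrix_mult_reduction_mat
    by (rule det_four_block_mat_lower_left_zero) (auto simp: snd_powers_mat_def varY_powers_mat_def)
  also have "\<dots> = (-1) ^ n * ?M * ?Y"
    by (simp add: det_varY_powers_mat det_smult)
  finally have "(det ?A * \<epsilon>) * ?Y = ((-1) ^ n * ?M) * ?Y"
    by (simp add: det_red mult_ac)
  moreover have "?Y \<noteq> 0"
    by (simp add: varY_def)
  ultimately have eq: "det ?A * \<epsilon> = (-1) ^ n * ?M"
    by simp
  have "F_U q n u = det ?A * (\<epsilon> * \<epsilon>)"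
    using \<epsilon> by (auto simp: F_U_def)
  also have "\<dots> = (-1) ^ n * \<epsilon> * ?M"
    by (simp only: mult.assoc[symmetric] eq) (simp only: mult_ac)
  finally have "F_U q n u = (-1) ^ n * \<epsilon> * ?M" .
  moreover have "(-1) ^ n * \<epsilon> = const2 ((-1) ^ n * (if \<epsilon> = 1 then 1 else -1))"
    using \<epsilon> by (auto simp: const2_mult const2_power const2_uminus)
  ultimately show ?thesis
    by (intro exI[of _ "(-1) ^ n * (if \<epsilon> = 1 then 1 else -1)"]) simp
qed

lemma moore_point_nonzero:
  fixes u :: "nat \<Rightarrow> 'a \<times> 'a"
  assumes indep: "Fq_independent q n u" and "l < n" and c: "c \<in> Fq_tuples q l"
  shows "moore_point u l c \<noteq> 0"
proof (rule notI)
  assume zero: "moore_point u l c = 0"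
  define d where "d i = (if i < l then - c i else if i = l then 1 else (0::'a))" for i
  have "Fq_independent q (Suc l) u"
    using \<open>l < n\<close> by (rule_tac Fq_independent_mono[OF indep _ Fq_0]) simp
  moreover have "\<forall>i<Suc l. d i \<in> Fq q"
    using c Fq_uminus Fq_1 by (auto simp: d_def Fq_tuples_def)
  moreover have "(\<Sum>i<Suc l. vscale (d i) (u i)) = 0"
  proof -
    have "(\<Sum>i<l. vscale (d i) (u i)) = - (\<Sum>i<l. vscale (c i) (u i))"
      unfolding sum_negf[symmetric] by (intro sum.cong) (auto simp: d_def vscale_uminus_left)
    then have "(\<Sum>i<Suc l. vscale (d i) (u i)) = moore_point u l c"
      by (simp add: d_def moore_point_def)
    with zero show ?thesis
      by simp
  qed
  ultimately have "d l = 0"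
    by (rule Fq_independentD) simp
  then show False
    by (simp add: d_def)
qed

lemma inj_on_Fq_combination_linform:
  fixes u :: "nat \<Rightarrow> 'a \<times> 'a"
  assumes indep: "Fq_independent q l u"
  shows "inj_on (\<lambda>c. \<Sum>j<l. const2 (c j) * linform (u j)) (Fq_tuples q l)"
proof (rule inj_onI)
  fix c c' assume c: "c \<in> Fq_tuples q l" and c': "c' \<in> Fq_tuples q l"
    and eq: "(\<Sum>j<l. const2 (c j) * linform (u j)) = (\<Sum>j<l. const2 (c' j) * linform (u j))"
  have "linform (\<Sum>j<l. vscale (c j - c' j) (u j)) = 0"
    using eq by (simp add: linform_sum linform_vscale const2_diff left_diff_distrib sum_subtractf)
  then have "(\<Sum>j<l. vscale (c j - c' j) (u j)) = 0"
    by (simp add: linform_eq_0_iff)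
  moreover have "\<forall>j<l. c j - c' j \<in> Fq q"
    using c c' Fq_diff by (auto simp: Fq_tuples_def)
  ultimately have eq_below: "c j = c' j" if "j < l" for j
    using Fq_independentD[OF indep, of "\<lambda>j. c j - c' j" j] that by simp
  show "c = c'"
    using c c' unfolding Fq_tuples_def by (rule PiE_ext) (simp add: eq_below)
qed

lemma det_moore_mat_linform:
  fixes u :: "nat \<Rightarrow> 'a \<times> 'a"
  assumes indep: "Fq_independent q n u" and card: "card (Fq q :: 'a set) = q" and "m \<le> n"
  shows "det (moore_mat q (\<lambda>r. linform (u r)) m)
    = (\<Prod>l<m. \<Prod>c\<in>Fq_tuples q l. linform (moore_point u l c))"
  using \<open>m \<le> n\<close>
proof (induction m)
  case (Suc m)
  have "Fq_independent q m u"
    using Suc.prems by (rule_tac Fq_independent_mono[OF indep _ Fq_0]) simp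
  then have "det (moore_mat q (\<lambda>r. linform (u r)) (Suc m))
      = det (moore_mat q (\<lambda>r. linform (u r)) m) *
        (\<Prod>c\<in>Fq_tuples q m. linform (u m) - (\<Sum>j<m. const2 (c j) * linform (u j)))"
    by (intro det_moore_mat_Suc inj_on_Fq_combination_linform card)
  also have "(\<Prod>c\<in>Fq_tuples q m. linform (u m) - (\<Sum>j<m. const2 (c j) * linform (u j)))
      = (\<Prod>c\<in>Fq_tuples q m. linform (moore_point u m c))"
    by (simp add: moore_point_def linform_diff linform_sum linform_vscale)
  finally show ?case
    using Suc by simp
qed simp

lemma F_U_product_of_linforms:
  fixes u :: "nat \<Rightarrow> 'a \<times> 'a"
  assumes indep: "Fq_independent q n u" and card: "card (Fq q :: 'a set) = q"
  shows "\<exists>e pts. e \<noteq> 0 \<and> (\<forall>v\<in>set pts. v \<noteq> 0) \<and> length pts = (\<Sum>i<n. q ^ i)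
    \<and> F_U q n u = const2 e * (\<Prod>v\<leftarrow>pts. linform v)"
proof -
  define I :: "(nat \<times> (nat \<Rightarrow> 'a)) set" where "I = Sigma {..<n} (Fq_tuples q)"
  obtain xs where xs: "distinct xs" "set xs = I"
    using finite_distinct_list[of I] by (auto simp: I_def)
  define pts where "pts = map (\<lambda>(l, c). moore_point u l c) xs"
  obtain e where "e \<noteq> 0" and e: "F_U q n u = const2 e * det (moore_mat q (\<lambda>r. linform (u r)) n)"
    using F_U_eq_det_moore_mat by blast
  have "det (moore_mat q (\<lambda>r. linform (u r)) n) = (\<Prod>(l, c)\<in>I. linform (moore_point u l c))"
    unfolding det_moore_mat_linform[OF indep card order.refl] I_def by (simp add: prod.Sigma)
  also have "\<dots> = (\<Prod>v\<leftarrow>pts. linform v)"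
    using prod.distinct_set_conv_list[OF xs(1), of "\<lambda>(l, c). linform (moore_point u l c)"] xs(2)
    by (simp add: pts_def split_def o_def)
  finally have "F_U q n u = const2 e * (\<Prod>v\<leftarrow>pts. linform v)"
    using e by simp
  moreover have "length pts = (\<Sum>i<n. q ^ i)"
    using xs distinct_card[OF xs(1)] by (simp add: pts_def I_def card_Fq_tuples card)
  moreover have "\<forall>v\<in>set pts. v \<noteq> 0"
    using xs moore_point_nonzero[OF indep] by (auto simp: pts_def I_def)
  ultimately show ?thesis
    using \<open>e \<noteq> 0\<close> by blast
qed

end

theorem mainTheorem3:
  fixes q n :: nat and U :: "('a::{finite,field} \<times> 'a) set" and u :: "nat \<Rightarrow> 'a \<times> 'a"
  assumes "prime_power q" and "n \<ge> 2" and "card (UNIV :: 'a set) = q ^ n"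
    and "Fq_subspace q U" and "Fq_basis q U n u"
  shows "\<exists>c (pts :: ('a \<times> 'a) list). c \<noteq> 0 \<and> (\<forall>v\<in>set pts. v \<noteq> (0, 0))
           \<and> length pts = (\<Sum>i<n. q ^ i)
           \<and> F_U q n u = const2 c * (\<Prod>v\<leftarrow>pts. linform v)"
proof -
  have "n > 0"
    using assms(2) by simp
  then obtain k where k: "k > 0" "q = CHAR('a) ^ k"
    using prime_power_card_imp_char_power assms(1,3) by blast
  have "card (Fq q :: 'a set) = q"
    using card_Fq[OF k(2,1) \<open>n > 0\<close> assms(3)] .
  then show ?thesis
    using F_U_product_of_linforms[OF k(2,1) Fq_basis_imp_independent[OF assms(5)]]
    by (simp add: zero_prod_def)
qed

end
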